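(* Let $k\ge 2$, let $U$ be any rotation of a binary de Bruijn cycle of order $k$, and let $w_{\mathrm{lin}}=U\,U[0..k-2]$ (a word of length $2^k+k-1$). Then the size of a smallest suffixient set for $w_{\mathrm{lin}}\$$ is $2^k+1$.
   Context: A binary de Bruijn cycle of order $k$ is a cyclic word $C$ of length $2^k$ over $\{0,1\}$ such that every word of $\{0,1\}^k$ occurs exactly once as a cyclic length-$k$ window of $C$. Strings are $0$-indexed; $w[i..j]$ is the substring from $i$ to $j$ inclusive. $\$$ is an end-marker not in $\{0,1\}$, occurring once at the end. For a string $v$ (over $\{0,1,\$\}$), a substring $x$ (possibly empty) is right-maximal if $xa$ and $xb$ are substrings of $v$ for two distinct symbols $a\ne b$; these words $xa$ are the right-extensions of $v$. A set $S$ of positions of $v$ is suffixient for $v$ if every right-extension of $v$ is a suffix of $v[0..j]$ for some $j\in S$. *)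

theory Defs
  imports Main "HOL-Library.Sublist"
begin

definition end_marker :: nat where "end_marker = 2"

definition binary_word :: "nat list \<Rightarrow> bool" where
  "binary_word w \<longleftrightarrow> set w \<subseteq> {0, 1}"

definition cyc_window :: "nat list \<Rightarrow> nat \<Rightarrow> nat \<Rightarrow> nat list" where
  "cyc_window C k i = map (\<lambda>j. C ! ((i + j) mod length C)) [0..<k]"

definition de_bruijn_cycle :: "nat \<Rightarrow> nat list \<Rightarrow> bool" where
  "de_bruijn_cycle k C \<longleftrightarrow> length C = 2 ^ k \<and> binary_word C \<and>
     (\<forall>w. length w = k \<and> binary_word w \<longrightarrow>
        card {i. i < length C \<and> cyc_window C k i = w} = 1)"

definition right_maximal :: "'a list \<Rightarrow> 'a list \<Rightarrow> bool" where
  "right_maximal x v \<longleftrightarrow> (\<exists>a b. a \<noteq> b \<and> sublist (x @ [a]) v \<and> sublist (x @ [b]) v)"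

definition right_extensions :: "'a list \<Rightarrow> 'a list set" where
  "right_extensions v = {x @ [a] | x a. right_maximal x v \<and> sublist (x @ [a]) v}"

definition suffixient :: "nat set \<Rightarrow> 'a list \<Rightarrow> bool" where
  "suffixient S v \<longleftrightarrow> S \<subseteq> {..<length v} \<and>
     (\<forall>y \<in> right_extensions v. \<exists>j \<in> S. suffix y (take (Suc j) v))"

end

theory Submission
  imports Defs
begin

(* Write L = 2^k. The length-k windows of w_lin starting at 0, ..., L - 1 are exactly the L
   binary words of length k, each occurring once. Every such window v is a right extension
   (butlast v is followed by both 0 and 1, as both extensions are windows too), and it occurs only
   ending at its own end position; the end-marker is a right extension occurring only at the last
   position. So every suffixient set contains the L + 1 positions k - 1, ..., L + k - 1.
   Conversely a right-maximal word x has length < k, since its first k letters determine the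
   position of any occurrence and hence the letter after x. So a right extension either contains
   the end-marker, and ends at the last position, or is a binary word of length at most k, hence
   a suffix of some window. *)

lemma suffix_iff_drop:
  "suffix y zs \<longleftrightarrow> length y \<le> length zs \<and> drop (length zs - length y) zs = y"
proof
  assume "suffix y zs"
  then obtain us where "zs = us @ y"
    by (rule suffixE)
  then show "length y \<le> length zs \<and> drop (length zs - length y) zs = y"
    by simp
next
  assume "length y \<le> length zs \<and> drop (length zs - length y) zs = y"
  then show "suffix y zs"
    using suffix_drop by metis
qed

lemma suffix_take_iff:
  assumes "n \<le> length xs"
  shows "suffix y (take n xs) \<longleftrightarrow> length y \<le> n \<and> take (length y) (drop (n - length y) xs) = y"
  using assms by (auto simp: suffix_iff_drop drop_take)

lemma last_suffix_snoc:
  assumes "suffix y (xs @ [e])" and "y \<noteq> []"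
  shows "last y = e"
  using assms snoc_suffix_snoc[of "butlast y" "last y" xs e] by simp

lemma suffix_take_snoc_notin:
  assumes "suffix y (take n (xs @ [e]))" and "y \<noteq> []" and "e \<notin> set y"
  shows "n \<le> length xs" and "suffix y (take n xs)"
proof -
  show "n \<le> length xs"
  proof (rule ccontr)
    assume "\<not> n \<le> length xs"
    then have "suffix y (xs @ [e])"
      using assms(1) by simp
    then show False
      using assms(2,3) last_suffix_snoc last_in_set by metis
  qed
  then show "suffix y (take n xs)"
    using assms(1) by simp
qed

lemma sublist_snoc_notin:
  assumes "sublist y (xs @ [e])" and "e \<notin> set y"
  shows "sublist y xs"
  using assms sublist_snoc[of y xs e] last_suffix_snoc last_in_set by (metis sublist_Nil_left)

lemma suffixient_contains_last:
  assumes "suffixient S (xs @ [e])" and "xs \<noteq> []" and "e \<notin> set xs"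
  shows "length xs \<in> S"
proof -
  have "prefix [hd xs] (xs @ [e])" and "suffix [e] (xs @ [e])"
    using assms(2) by (cases xs) (auto simp: suffix_def)
  moreover have "hd xs \<noteq> e"
    using assms(2,3) hd_in_set by metis
  ultimately have "right_maximal [] (xs @ [e])"
    unfolding right_maximal_def by (metis append_Nil prefix_imp_sublist suffix_imp_sublist)
  then have "[e] \<in> right_extensions (xs @ [e])"
    unfolding right_extensions_def by force
  then obtain j where j: "j \<in> S" "suffix [e] (take (Suc j) (xs @ [e]))"
    using assms(1) unfolding suffixient_def by blast
  have "j < Suc (length xs)"
    using j(1) assms(1) unfolding suffixient_def by auto
  then have "take (Suc j) (xs @ [e]) = take j (xs @ [e]) @ [(xs @ [e]) ! j]"
    by (intro take_Suc_conv_app_nth) simp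
  then have "(xs @ [e]) ! j = e"
    using j(2) by (metis append_Nil snoc_suffix_snoc)
  then have "j = length xs"
    using assms(3) \<open>j < Suc (length xs)\<close> by (auto simp: nth_append split: if_splits)
  then show ?thesis
    using j(1) by simp
qed

locale linear_de_bruijn =
  fixes k :: nat and w :: "nat list"
  assumes order_pos: "0 < k"
    and binary: "binary_word w"
    and length_word: "length w = 2 ^ k + k - 1"
    and windows_bij: "bij_betw (\<lambda>i. take k (drop i w)) {..<2 ^ k} {v. length v = k \<and> binary_word v}"
begin

lemma Suc_length_word: "Suc (length w) = 2 ^ k + k"
  using length_word order_pos by simp

lemma word_nonempty: "w \<noteq> []"
proof -
  have "(1::nat) \<le> 2 ^ k"
    by simp
  then have "0 < length w"
    using Suc_length_word order_pos by linarith
  then show ?thesis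
    by simp
qed

lemma window_inj:
  assumes "i < 2 ^ k" and "j < 2 ^ k" and "take k (drop i w) = take k (drop j w)"
  shows "i = j"
  using assms bij_betw_imp_inj_on[OF windows_bij] by (auto dest: inj_onD)

lemma window_exists:
  assumes "length v = k" and "binary_word v"
  shows "\<exists>i<2 ^ k. take k (drop i w) = v"
  using assms bij_betw_imp_surj_on[OF windows_bij]
  by (metis (mono_tags, lifting) imageE lessThan_iff mem_Collect_eq)

lemma window_binary:
  assumes "i < 2 ^ k"
  shows "length (take k (drop i w)) = k" and "binary_word (take k (drop i w))"
  using bij_betw_apply[OF windows_bij] assms by auto

lemma marker_notin_word:
  assumes "e \<notin> {0, 1}"
  shows "e \<notin> set w"
  using binary assms unfolding binary_word_def by auto

lemma window_sublist: "sublist (take k (drop i w)) (w @ [e])"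
  by (metis sublist_take sublist_drop sublist_append_rightI sublist_order.order.trans)

lemma window_suffix_take:
  assumes "i < 2 ^ k"
  shows "suffix (take k (drop i w)) (take (i + k) w)"
  using assms length_word suffix_take_iff[of "i + k" w] by simp

lemma window_end_unique:
  assumes "i < 2 ^ k" and "n \<le> length w" and "suffix (take k (drop i w)) (take n w)"
  shows "n = i + k"
proof -
  have "k \<le> n" and "take k (drop (n - k) w) = take k (drop i w)"
    using assms suffix_take_iff[of n w] length_word by auto
  moreover have "n - k < 2 ^ k"
    using \<open>k \<le> n\<close> assms(2) Suc_length_word by linarith
  ultimately show ?thesis
    using window_inj[of "n - k" i] assms(1) by simp
qed

lemma long_occurrence_at_window:
  assumes "sublist (x @ [a]) (w @ [e])" and "k \<le> length x"
  shows "\<exists>p<2 ^ k. take k (drop p w) = take k x \<and> take (Suc (length x)) (drop p (w @ [e])) = x @ [a]"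
proof -
  obtain ps ss where split: "w @ [e] = ps @ x @ a # ss"
    using assms(1) by (auto simp: sublist_def)
  then have "length w + 1 = length ps + length x + Suc (length ss)"
    by (metis add.assoc length_Cons length_append length_append_singleton Suc_eq_plus1)
  then have "length ps + k \<le> length w"
    using assms(2) by linarith
  then have "length ps < 2 ^ k"
    and "take k (drop (length ps) w) = take k (drop (length ps) (w @ [e]))"
    using Suc_length_word by simp_all
  moreover have "take k (drop (length ps) (w @ [e])) = take k x"
    and "take (Suc (length x)) (drop (length ps) (w @ [e])) = x @ [a]"
    using split assms(2) by simp_all
  ultimately show ?thesis
    by auto
qed

lemma right_maximal_length_less:
  assumes "right_maximal x (w @ [e])"
  shows "length x < k"
proof (rule ccontr)
  assume "\<not> length x < k"
  then have long: "k \<le> length x"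
    by simp
  obtain a b where "a \<noteq> b" and a: "sublist (x @ [a]) (w @ [e])" and b: "sublist (x @ [b]) (w @ [e])"
    using assms unfolding right_maximal_def by blast
  obtain p where p: "p < 2 ^ k" "take k (drop p w) = take k x"
    "take (Suc (length x)) (drop p (w @ [e])) = x @ [a]"
    using long_occurrence_at_window[OF a long] by blast
  obtain q where q: "q < 2 ^ k" "take k (drop q w) = take k x"
    "take (Suc (length x)) (drop q (w @ [e])) = x @ [b]"
    using long_occurrence_at_window[OF b long] by blast
  have "p = q"
    using window_inj p(1,2) q(1,2) by simp
  then have "x @ [a] = x @ [b]"
    using p(3) q(3) by simp
  with \<open>a \<noteq> b\<close> show False
    by simp
qed

lemma binary_suffix_window:
  assumes "binary_word y" and "length y \<le> k"
  shows "\<exists>i<2 ^ k. suffix y (take (i + k) w)"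
proof -
  define z where "z = replicate (k - length y) 0 @ y"
  have "length z = k" and "binary_word z"
    using assms unfolding z_def binary_word_def by auto
  then obtain i where "i < 2 ^ k" "take k (drop i w) = z"
    using window_exists by blast
  then have "suffix z (take (i + k) w)"
    using window_suffix_take by blast
  moreover have "suffix y z"
    unfolding z_def by (rule suffixI) simp
  ultimately show ?thesis
    using \<open>i < 2 ^ k\<close> suffix_order.trans by blast
qed

lemma window_right_extension:
  assumes "i < 2 ^ k"
  shows "take k (drop i w) \<in> right_extensions (w @ [e])"
proof -
  define v where "v = take k (drop i w)"
  have "length v = k" and "binary_word v"
    using window_binary[OF assms] unfolding v_def by simp_all
  then have "v \<noteq> []" and split: "v = butlast v @ [last v]"
    using order_pos by auto
  have "sublist (butlast v @ [a]) (w @ [e])" if "a \<in> {0, 1}" for a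
  proof -
    have "length (butlast v @ [a]) = k" and "binary_word (butlast v @ [a])"
      using \<open>length v = k\<close> \<open>binary_word v\<close> order_pos that
      by (auto simp: binary_word_def dest: in_set_butlastD)
    then obtain j where "take k (drop j w) = butlast v @ [a]"
      using window_exists by blast
    then show ?thesis
      using window_sublist by metis
  qed
  then have "right_maximal (butlast v) (w @ [e])"
    unfolding right_maximal_def by (metis insertCI zero_neq_one)
  moreover have "sublist v (w @ [e])"
    unfolding v_def by (rule window_sublist)
  ultimately have "\<exists>x a. v = x @ [a] \<and> right_maximal x (w @ [e]) \<and> sublist (x @ [a]) (w @ [e])"
    using split by metis
  then show ?thesis
    unfolding right_extensions_def v_def by blast
qed

lemma suffixient_contains_window_end:
  assumes "e \<notin> {0, 1}" and "suffixient S (w @ [e])" and "i < 2 ^ k"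
  shows "i + k - 1 \<in> S"
proof -
  define v where "v = take k (drop i w)"
  obtain j where "j \<in> S" and j: "suffix v (take (Suc j) (w @ [e]))"
    using assms(2) window_right_extension[OF assms(3)] unfolding suffixient_def v_def by blast
  have "length v = k" and "binary_word v"
    using window_binary[OF assms(3)] unfolding v_def by simp_all
  then have "v \<noteq> []" and "e \<notin> set v"
    using order_pos assms(1) unfolding binary_word_def by auto
  then have "Suc j \<le> length w" and "suffix v (take (Suc j) w)"
    using suffix_take_snoc_notin[OF j] by auto
  then have "Suc j = i + k"
    using window_end_unique assms(3) unfolding v_def by blast
  with \<open>j \<in> S\<close> show ?thesis
    by (metis diff_Suc_1)
qed

theorem suffixient_contains_interval:
  assumes "e \<notin> {0, 1}" and "suffixient S (w @ [e])"
  shows "{k - 1 .. length w} \<subseteq> S"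
proof
  fix j assume j: "j \<in> {k - 1 .. length w}"
  show "j \<in> S"
  proof (cases "j = length w")
    case True
    then show ?thesis
      using suffixient_contains_last[OF assms(2) word_nonempty marker_notin_word[OF assms(1)]] by simp
  next
    case False
    define i where "i = j - (k - 1)"
    have "i < 2 ^ k" and "i + k - 1 = j"
      using j False Suc_length_word order_pos unfolding i_def by auto
    then show ?thesis
      using suffixient_contains_window_end[OF assms \<open>i < 2 ^ k\<close>] by simp
  qed
qed

theorem interval_suffixient:
  assumes "e \<notin> {0, 1}"
  shows "suffixient {k - 1 .. length w} (w @ [e])"
  unfolding suffixient_def
proof (intro conjI ballI)
  show "{k - 1 .. length w} \<subseteq> {..<length (w @ [e])}"
    by auto
next
  fix y assume "y \<in> right_extensions (w @ [e])"
  then obtain x a where y: "y = x @ [a]" and "right_maximal x (w @ [e])"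
    and occurs: "sublist y (w @ [e])"
    unfolding right_extensions_def by blast
  show "\<exists>j\<in>{k - 1 .. length w}. suffix y (take (Suc j) (w @ [e]))"
  proof (cases "e \<in> set y")
    case True
    then have "\<not> sublist y w"
      using marker_notin_word[OF assms] set_mono_sublist[of y w] by blast
    then have "suffix y (w @ [e])"
      using occurs sublist_snoc[of y w e] by blast
    then have "suffix y (take (Suc (length w)) (w @ [e]))"
      by simp
    moreover have "length w \<in> {k - 1 .. length w}"
      using Suc_length_word by simp
    ultimately show ?thesis
      by blast
  next
    case False
    then have "binary_word y"
      using sublist_snoc_notin[OF occurs] binary set_mono_sublist unfolding binary_word_def by blast
    moreover have "length y \<le> k"
      using right_maximal_length_less[OF \<open>right_maximal x (w @ [e])\<close>] y by simp
    ultimately obtain i where "i < 2 ^ k" and "suffix y (take (i + k) w)"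
      using binary_suffix_window by blast
    moreover have "i + k \<le> length w"
      using \<open>i < 2 ^ k\<close> Suc_length_word by simp
    ultimately have "suffix y (take (Suc (i + k - 1)) (w @ [e]))"
      using order_pos by simp
    moreover have "i + k - 1 \<in> {k - 1 .. length w}"
      using \<open>i + k \<le> length w\<close> unfolding atLeastAtMost_iff by linarith
    ultimately show ?thesis
      by blast
  qed
qed

end

lemma bij_betw_add_mod:
  fixes n r :: nat
  assumes "0 < n"
  shows "bij_betw (\<lambda>i. (i + r) mod n) {..<n} {..<n}"
proof (rule bij_betw_byWitness[where f' = "\<lambda>i. (i + (n - r mod n)) mod n"])
  have "r = n * (r div n) + r mod n" and "r mod n < n"
    using assms by simp_all
  then have full_turn: "r + (n - r mod n) = n * Suc (r div n)"
    unfolding mult_Suc_right by linarith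
  show "\<forall>i\<in>{..<n}. ((i + r) mod n + (n - r mod n)) mod n = i"
    unfolding mod_add_left_eq add.assoc full_turn mod_mult_self2 by simp
  show "\<forall>i\<in>{..<n}. ((i + (n - r mod n)) mod n + r) mod n = i"
    unfolding mod_add_left_eq add.assoc add.commute[of "n - r mod n"] full_turn mod_mult_self2 by simp
qed (use assms in auto)

lemma cyc_window_rotate:
  assumes "C \<noteq> []"
  shows "cyc_window (rotate r C) k i = cyc_window C k ((i + r) mod length C)"
proof -
  have "(r + (i + j) mod length C) mod length C = ((i + r) mod length C + j) mod length C" for j
    unfolding mod_add_right_eq mod_add_left_eq by (simp add: ac_simps)
  then show ?thesis
    using assms by (simp add: cyc_window_def nth_rotate)
qed

lemma window_append_take_eq_cyc_window:
  assumes "i < length U" and "k \<le> Suc (length U)"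
  shows "take k (drop i (U @ take (k - 1) U)) = cyc_window U k i"
proof (rule nth_equalityI)
  show "length (take k (drop i (U @ take (k - 1) U))) = length (cyc_window U k i)"
    using assms by (simp add: cyc_window_def)
next
  fix j assume "j < length (take k (drop i (U @ take (k - 1) U)))"
  then have "j < k"
    by (metis length_take min_less_iff_conj)
  show "take k (drop i (U @ take (k - 1) U)) ! j = cyc_window U k i ! j"
  proof (cases "i + j < length U")
    case True
    then show ?thesis using \<open>j < k\<close> by (simp add: cyc_window_def nth_append less_diff_conv)
  next
    case False
    then have "(i + j) mod length U = i + j - length U"
      using assms \<open>j < k\<close> False by (simp add: le_mod_geq)
    then show ?thesis
      using False assms \<open>j < k\<close> by (simp add: cyc_window_def nth_append less_diff_conv add.commute)
  qed
qed

lemma length_cyc_window [simp]: "length (cyc_window C k i) = k"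
  by (simp add: cyc_window_def)

lemma set_cyc_window_subset:
  assumes "C \<noteq> []"
  shows "set (cyc_window C k i) \<subseteq> set C"
  using assms by (clarsimp simp: cyc_window_def)

lemma de_bruijn_cycle_window_unique:
  assumes "de_bruijn_cycle k C" and "length v = k" and "binary_word v"
  shows "\<exists>!i. i < 2 ^ k \<and> cyc_window C k i = v"
proof -
  have "card {i. i < 2 ^ k \<and> cyc_window C k i = v} = 1"
    using assms unfolding de_bruijn_cycle_def by auto
  then obtain c where "{i. i < 2 ^ k \<and> cyc_window C k i = v} = {c}"
    unfolding One_nat_def card_1_singleton_iff by blast
  then show ?thesis
    by (metis (mono_tags, lifting) mem_Collect_eq singletonD singletonI)
qed

lemma de_bruijn_cycle_windows_bij:
  assumes "de_bruijn_cycle k C"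
  shows "bij_betw (cyc_window C k) {..<2 ^ k} {v. length v = k \<and> binary_word v}"
proof (rule bij_betwI')
  have "C \<noteq> []" and "binary_word C"
    using assms unfolding de_bruijn_cycle_def by auto
  then show window: "cyc_window C k i \<in> {v. length v = k \<and> binary_word v}" for i
    using set_cyc_window_subset unfolding binary_word_def by fastforce
  show "cyc_window C k i = cyc_window C k j \<longleftrightarrow> i = j"
    if "i \<in> {..<2 ^ k}" and "j \<in> {..<2 ^ k}" for i j
    using de_bruijn_cycle_window_unique[OF assms, of "cyc_window C k i"] window that by auto
  show "\<exists>i\<in>{..<2 ^ k}. v = cyc_window C k i"
    if v: "v \<in> {v. length v = k \<and> binary_word v}" for v
  proof -
    obtain i where "i < 2 ^ k" and "cyc_window C k i = v"
      using de_bruijn_cycle_window_unique[OF assms] v by blast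
    then show ?thesis
      by auto
  qed
qed

lemma window_rotate_append_take:
  assumes "i < length C" and "k \<le> Suc (length C)"
  shows "take k (drop i (rotate r C @ take (k - 1) (rotate r C))) = cyc_window C k ((i + r) mod length C)"
proof -
  have "take k (drop i (rotate r C @ take (k - 1) (rotate r C))) = cyc_window (rotate r C) k i"
    using assms by (simp only: window_append_take_eq_cyc_window length_rotate)
  also have "\<dots> = cyc_window C k ((i + r) mod length C)"
    using assms(1) by (auto intro: cyc_window_rotate)
  finally show ?thesis .
qed

lemma linear_de_bruijn_rotate:
  assumes "de_bruijn_cycle k C" and "0 < k"
  shows "linear_de_bruijn k (rotate r C @ take (k - 1) (rotate r C))"
proof
  let ?w = "rotate r C @ take (k - 1) (rotate r C)"
  have C: "length C = 2 ^ k" "binary_word C"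
    using assms(1) unfolding de_bruijn_cycle_def by blast+
  have "k < 2 ^ k"
    by (rule less_exp)
  have "bij_betw (cyc_window C k \<circ> (\<lambda>i. (i + r) mod 2 ^ k))
      {..<2 ^ k} {v. length v = k \<and> binary_word v}"
    using bij_betw_trans[OF bij_betw_add_mod de_bruijn_cycle_windows_bij[OF assms(1)]] by simp
  moreover have "take k (drop i ?w) = (cyc_window C k \<circ> (\<lambda>i. (i + r) mod 2 ^ k)) i"
    if "i < 2 ^ k" for i
    using window_rotate_append_take[of i C k r] that C(1) \<open>k < 2 ^ k\<close> by simp
  ultimately show "bij_betw (\<lambda>i. take k (drop i ?w))
      {..<2 ^ k} {v. length v = k \<and> binary_word v}"
    using bij_betw_cong[of "{..<2 ^ k}" "\<lambda>i. take k (drop i ?w)"] by blast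
  show "binary_word ?w"
    using C(2) set_take_subset[of "k - 1" "rotate r C"] unfolding binary_word_def by auto
  have "k - 1 \<le> length C"
    using C(1) \<open>k < 2 ^ k\<close> by linarith
  then have "length ?w = length C + (k - 1)"
    by simp
  then show "length ?w = 2 ^ k + k - 1"
    using C(1) assms(2) by linarith
qed (use assms(2) in simp)

theorem lemma4:
  fixes k r :: nat and C :: "nat list"
  assumes "k \<ge> 2" and "de_bruijn_cycle k C"
  defines "U \<equiv> rotate r C"
  defines "w_lin \<equiv> U @ take (k - 1) U"
  shows "(\<exists>S. suffixient S (w_lin @ [end_marker]) \<and> card S = 2 ^ k + 1) \<and>
         (\<forall>S. suffixient S (w_lin @ [end_marker]) \<longrightarrow> card S \<ge> 2 ^ k + 1)"
proof -
  have "0 < k"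
    using assms(1) by simp
  then interpret linear_de_bruijn k w_lin
    unfolding w_lin_def U_def using assms(2) by (rule linear_de_bruijn_rotate[rotated])
  have marker: "end_marker \<notin> {0, 1}"
    by (simp add: end_marker_def)
  have card_interval: "card {k - 1 .. length w_lin} = 2 ^ k + 1"
    using Suc_length_word \<open>0 < k\<close> by simp
  have "2 ^ k + 1 \<le> card S" if "suffixient S (w_lin @ [end_marker])" for S
  proof -
    have "finite S"
      using that unfolding suffixient_def using finite_subset by blast
    then show ?thesis
      using card_mono suffixient_contains_interval[OF marker that] card_interval by metis
  qed
  then show ?thesis
    using interval_suffixient[OF marker] card_interval by blast
qed

end
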